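(* Let $I$ be the set of all $231$-avoiding permutations (of all sizes $n\ge0$, including the empty permutation) all of whose cycles have length $1$ or $2$. Then \[ i(t,x)=\sum_{\pi\in I}t^{c_1(\pi)}x^{c_2(\pi)}=\dfrac{1-x}{1-t-2x}. \]
   Context: A permutation avoids $231$ if there are no indices $i<j<k$ with $\pi_k<\pi_i<\pi_j$. $c_k(\pi)$ denotes the number of $k$-cycles of $\pi$. *)

theory Defs
  imports "HOL-Combinatorics.Combinatorics" "HOL-Computational_Algebra.Formal_Power_Series"
begin

text \<open>A permutation of size n is a function p with p permutes {1..n}
  (identity outside {1..n}); the empty permutation is the case n = 0.\<close>

definition avoids231 :: "nat \<Rightarrow> (nat \<Rightarrow> nat) \<Rightarrow> bool" where
  "avoids231 n p \<longleftrightarrow>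
     \<not> (\<exists>i j k. 1 \<le> i \<and> i < j \<and> j < k \<and> k \<le> n \<and> p k < p i \<and> p i < p j)"

definition cycles_of :: "nat \<Rightarrow> (nat \<Rightarrow> nat) \<Rightarrow> nat set set" where
  "cycles_of n p = (\<lambda>x. orbit p x) ` {1..n}"

definition ncyc :: "nat \<Rightarrow> (nat \<Rightarrow> nat) \<Rightarrow> nat \<Rightarrow> nat" where
  "ncyc k p n = card {C \<in> cycles_of n p. card C = k}"

definition I_set :: "(nat \<times> (nat \<Rightarrow> nat)) set" where
  "I_set = {(n, p). p permutes {1..n} \<and> avoids231 n p \<and>
                    (\<forall>C \<in> cycles_of n p. card C = 1 \<or> card C = 2)}"

text \<open>Bivariate generating function sum over I of t^c1 x^c2, as a formal power series
  in x whose coefficients are formal power series in t.\<close>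

definition i_gf :: "real fps fps" where
  "i_gf = Abs_fps (\<lambda>b. Abs_fps (\<lambda>a.
      of_nat (card {(n, p) \<in> I_set. ncyc 1 p n = a \<and> ncyc 2 p n = b})))"

definition t_var :: "real fps fps" where
  "t_var = fps_const fps_X"

end

theory Submission
  imports Defs
begin

(* If p is a 231-avoiding involution of {1..n} and k = p n, then p reverses the block {k..n}
   and restricts to a 231-avoiding involution of {1..k-1}; conversely every such pair glues
   to one.  A reversed block of length m contributes m mod 2 fixed points and m div 2
   two-cycles.  Splitting off the last block, blocks of length 1 and 2 give the terms t i
   and x i, while blocks of length at least 3, shortened by 2, give x (i - 1).  Hence
   i = 1 + t i + x i + x (i - 1), i.e. i (1 - t - 2x) = 1 - x, which is checked
   coefficientwise. *)

unbundle fps_syntax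

definition invol231 :: "nat \<Rightarrow> (nat \<Rightarrow> nat) set" where
  "invol231 n = {p. p permutes {1..n} \<and> avoids231 n p \<and> (\<forall>x. p (p x) = x)}"

definition append_reversal :: "nat \<Rightarrow> nat \<Rightarrow> (nat \<Rightarrow> nat) \<Rightarrow> nat \<Rightarrow> nat" where
  "append_reversal k n r = (\<lambda>x. if x < k then r x else if x \<le> n then k + n - x else x)"

definition restrict_below :: "nat \<Rightarrow> (nat \<Rightarrow> nat) \<Rightarrow> nat \<Rightarrow> nat" where
  "restrict_below k p = (\<lambda>x. if x < k then p x else x)"

lemma involution_permutes:
  assumes "\<And>x. p (p x) = x" and "\<And>x. x \<notin> S \<Longrightarrow> p x = x"
  shows "p permutes S"
  unfolding permutes_def by (metis assms)

lemma invol231_D: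
  assumes "p \<in> invol231 n"
  shows "p permutes {1..n}" "avoids231 n p" "p (p x) = x"
  using assms by (auto simp: invol231_def)

lemma invol231_0: "invol231 0 = {id}"
  by (auto simp: invol231_def avoids231_def)

lemma finite_invol231: "finite (invol231 n)"
  by (rule finite_subset[of _ "{p. p permutes {1..n}}"]) (auto simp: invol231_def finite_permutations)

lemma invol231_outside: "p \<in> invol231 n \<Longrightarrow> x \<notin> {1..n} \<Longrightarrow> p x = x"
  by (auto simp: invol231_def intro: permutes_not_in)

lemma invol231_in_range: "p \<in> invol231 n \<Longrightarrow> x \<in> {1..n} \<Longrightarrow> p x \<in> {1..n}"
  using permutes_in_image[OF invol231_D(1)] by blast

lemma invol231_le:
  assumes "p \<in> invol231 n" "x \<le> n"
  shows "p x \<le> n"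
  using invol231_in_range[OF assms(1), of x] invol231_outside[OF assms(1), of x] assms(2)
  by (cases "x = 0") auto

lemma append_reversal_in_invol231:
  assumes k: "1 \<le> k" "k \<le> n" and r: "r \<in> invol231 (k - 1)"
  shows "append_reversal k n r \<in> invol231 n"
proof -
  let ?p = "append_reversal k n r"
  have below: "r x < k" if "x < k" for x
    using invol231_le[OF r, of x] that k by linarith
  have "?p (?p x) = x" for x
    using below[of x] invol231_D(3)[OF r, of x] by (auto simp: append_reversal_def)
  moreover have "?p x = x" if "x \<notin> {1..n}" for x
    using that k invol231_outside[OF r, of 0] by (cases "x = 0") (auto simp: append_reversal_def)
  moreover have "avoids231 n ?p"
    unfolding avoids231_def
  proof clarify
    fix i j l assume h: "1 \<le> i" "i < j" "j < l" "l \<le> n" "?p l < ?p i" "?p i < ?p j"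
    have "l < k"
    proof (rule ccontr)
      assume "\<not> l < k"
      then show False
        using h below[of i] by (cases "i < k") (auto simp: append_reversal_def split: if_splits)
    qed
    then have "r l < r i" "r i < r j" "l \<le> k - 1"
      using h by (auto simp: append_reversal_def)
    then show False
      using invol231_D(2)[OF r] h(1-3) by (auto simp: avoids231_def)
  qed
  ultimately show ?thesis
    by (auto simp: invol231_def intro: involution_permutes)
qed

lemma strict_antimono_on_interval_eq_reflection:
  fixes f :: "nat \<Rightarrow> nat"
  assumes dec: "\<And>i j. k \<le> i \<Longrightarrow> i < j \<Longrightarrow> j \<le> n \<Longrightarrow> f j < f i"
    and "k \<le> f n" "f k \<le> n" "k \<le> x" "x \<le> n"
  shows "f x = k + n - x"
proof -
  have gap: "f j + (j - i) \<le> f i" if "k \<le> i" "i \<le> j" "j \<le> n" for i j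
    using that(2,3)
  proof (induction j rule: dec_induct)
    case (step j)
    then show ?case using dec[of j "Suc j"] that(1) by simp
  qed simp
  show ?thesis
    using gap[of x n] gap[of k x] assms(2-5) by linarith
qed

lemma invol231_tail_reversal:
  assumes p: "p \<in> invol231 n" and n: "1 \<le> n" and x: "p n \<le> x" "x \<le> n"
  shows "p x = p n + n - x"
proof -
  define k where "k = p n"
  have invo: "p (p y) = y" for y using invol231_D(3)[OF p] .
  have inj: "i = j" if "p i = p j" for i j by (metis invo that)
  note range = invol231_in_range[OF p]
  have k: "1 \<le> k" "k \<le> n" using range[of n] n x k_def by auto
  have pk: "p k = n" using invo k_def by simp
  have no231: "\<not> (1 \<le> i \<and> i < j \<and> j < l \<and> l \<le> n \<and> p l < p i \<and> p i < p j)" for i j l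
    using invol231_D(2)[OF p] by (auto simp: avoids231_def)
  have ge: "k \<le> p y" if "k \<le> y" "y \<le> n" for y
  proof (rule ccontr)
    assume "\<not> k \<le> p y"
    moreover have "1 \<le> p y" using range[of y] that k by auto
    moreover have "y \<noteq> k" "y \<noteq> n" using \<open>\<not> k \<le> p y\<close> pk k_def k by auto
    ultimately show False
      using no231[of "p y" k n] that invo[of y] pk k_def by auto
  qed
  have dec: "p j < p i" if "k \<le> i" "i < j" "j \<le> n" for i j
  proof -
    have "p i \<noteq> p j" "p i \<noteq> k" using inj[of i j] inj[of i n] that k_def by auto
    then show ?thesis
      using no231[of i j n] ge[of i] that k k_def by (cases "j = n") auto
  qed
  show ?thesis
    using strict_antimono_on_interval_eq_reflection[of k n p x] dec k pk x k_def by simp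
qed

lemma invol231_below:
  assumes p: "p \<in> invol231 n" and n: "1 \<le> n" and x: "x < p n"
  shows "p x < p n"
proof (cases "x = 0")
  case True
  then show ?thesis using invol231_outside[OF p, of 0] x by simp
next
  case False
  have "p n \<le> n" using invol231_le[OF p] by simp
  then have px: "p x \<in> {1..n}" using invol231_in_range[OF p, of x] False x by simp
  show ?thesis
  proof (rule ccontr)
    assume "\<not> p x < p n"
    then have "x = p n + n - p x"
      using invol231_tail_reversal[OF p n, of "p x"] invol231_D(3)[OF p, of x] px by simp
    then show False using x px by arith
  qed
qed

lemma invol231_decompose:
  assumes p: "p \<in> invol231 n" and n: "1 \<le> n"
  shows "restrict_below (p n) p \<in> invol231 (p n - 1)"
    and "append_reversal (p n) n (restrict_below (p n) p) = p"
proof -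
  let ?r = "restrict_below (p n) p"
  have pn: "1 \<le> p n" using invol231_in_range[OF p, of n] n by simp
  have "?r (?r x) = x" for x
    using invol231_below[OF p n, of x] invol231_D(3)[OF p] by (auto simp: restrict_below_def)
  moreover have "?r x = x" if "x \<notin> {1..p n - 1}" for x
    using that invol231_outside[OF p, of 0] by (cases "x = 0") (auto simp: restrict_below_def)
  moreover have "avoids231 (p n - 1) ?r"
    unfolding avoids231_def
  proof clarify
    fix i j l assume h: "1 \<le> i" "i < j" "j < l" "l \<le> p n - 1" "?r l < ?r i" "?r i < ?r j"
    then have "i < p n" "j < p n" "l < p n" using pn by auto
    then have "p l < p i" "p i < p j" "l \<le> n"
      using h invol231_le[OF p, of n] by (auto simp: restrict_below_def)
    then show False
      using invol231_D(2)[OF p] h(1-3) by (auto simp: avoids231_def)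
  qed
  ultimately show "?r \<in> invol231 (p n - 1)"
    by (auto simp: invol231_def intro: involution_permutes)
  show "append_reversal (p n) n ?r = p"
  proof
    fix x
    show "append_reversal (p n) n ?r x = p x"
      using invol231_tail_reversal[OF p n, of x] invol231_outside[OF p, of x]
      by (auto simp: append_reversal_def restrict_below_def)
  qed
qed

lemma restrict_below_append_reversal:
  assumes "r \<in> invol231 (k - 1)"
  shows "restrict_below k (append_reversal k n r) = r"
proof
  fix x
  show "restrict_below k (append_reversal k n r) x = r x"
  proof (cases "x < k")
    case False
    then have "x \<notin> {1..k - 1}" by auto
    then show ?thesis
      using False invol231_outside[OF assms] by (simp add: restrict_below_def append_reversal_def)
  qed (simp add: restrict_below_def append_reversal_def)
qed

definition nfix :: "nat \<Rightarrow> (nat \<Rightarrow> nat) \<Rightarrow> nat" where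
  "nfix n p = card {x \<in> {1..n}. p x = x}"

definition nexc :: "nat \<Rightarrow> (nat \<Rightarrow> nat) \<Rightarrow> nat" where
  "nexc n p = card {x \<in> {1..n}. x < p x}"

lemma nfix_append_reversal:
  assumes "1 \<le> k" "k \<le> n"
  shows "nfix n (append_reversal k n r) = nfix (k - 1) r + (if even (n - k) then 1 else 0)"
proof -
  have split: "{x \<in> {1..n}. append_reversal k n r x = x}
      = {x \<in> {1..k - 1}. r x = x} \<union> {x \<in> {k..n}. k + n - x = x}"
    using assms by (auto simp: append_reversal_def)
  have "{x \<in> {k..n}. k + n - x = x} = {x \<in> {k..n}. 2 * x = k + n}"
    by auto
  also have "\<dots> = (if even (k + n) then {(k + n) div 2} else {})"
  proof (cases "even (k + n)")
    case True
    then show ?thesis using assms(2) by (auto elim!: evenE)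
  next
    case False
    then have "2 * x \<noteq> k + n" for x by (metis dvd_triv_left)
    then show ?thesis using False by auto
  qed
  finally have mid: "{x \<in> {k..n}. k + n - x = x} = (if even (n - k) then {(k + n) div 2} else {})"
    using assms(2) by (simp add: add.commute)
  have "card ({x \<in> {1..k - 1}. r x = x} \<union> {x \<in> {k..n}. k + n - x = x})
      = card {x \<in> {1..k - 1}. r x = x} + card {x \<in> {k..n}. k + n - x = x}"
    by (rule card_Un_disjoint) auto
  then show ?thesis
    unfolding nfix_def split mid by simp
qed

lemma nexc_append_reversal:
  assumes "1 \<le> k" "k \<le> n"
  shows "nexc n (append_reversal k n r) = nexc (k - 1) r + (n - k + 1) div 2"
proof -
  have split: "{x \<in> {1..n}. x < append_reversal k n r x}
      = {x \<in> {1..k - 1}. x < r x} \<union> {x \<in> {k..n}. x < k + n - x}"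
    using assms by (auto simp: append_reversal_def)
  have mid: "{x \<in> {k..n}. x < k + n - x} = {k..<k + (n - k + 1) div 2}"
    using assms by auto
  have "card ({x \<in> {1..k - 1}. x < r x} \<union> {x \<in> {k..n}. x < k + n - x})
      = card {x \<in> {1..k - 1}. x < r x} + card {x \<in> {k..n}. x < k + n - x}"
    by (rule card_Un_disjoint) auto
  then show ?thesis
    unfolding nexc_def split mid by simp
qed

definition count_invol231 :: "nat \<Rightarrow> (nat \<Rightarrow> nat \<Rightarrow> bool) \<Rightarrow> nat" where
  "count_invol231 n P = card {p \<in> invol231 n. P (nfix n p) (nexc n p)}"

lemma count_invol231_0: "count_invol231 0 P = (if P 0 0 then 1 else 0)"
  by (simp add: count_invol231_def invol231_0 nfix_def nexc_def)

lemma count_invol231_decompose: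
  assumes n: "1 \<le> n"
  shows "count_invol231 n P = (\<Sum>k\<in>{1..n}. count_invol231 (k - 1)
           (\<lambda>a b. P (a + (if even (n - k) then 1 else 0)) (b + (n - k + 1) div 2)))"
proof -
  define S where "S k = {r \<in> invol231 (k - 1).
    P (nfix (k - 1) r + (if even (n - k) then 1 else 0)) (nexc (k - 1) r + (n - k + 1) div 2)}" for k
  have stats: "P (nfix n (append_reversal k n r)) (nexc n (append_reversal k n r)) \<longleftrightarrow> r \<in> S k"
    if "k \<in> {1..n}" "r \<in> invol231 (k - 1)" for k r
    using that nfix_append_reversal[of k n r] nexc_append_reversal[of k n r] by (simp add: S_def)
  have "{p \<in> invol231 n. P (nfix n p) (nexc n p)} = (\<Union>k\<in>{1..n}. append_reversal k n ` S k)"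
  proof (intro equalityI subsetI)
    fix p assume "p \<in> {p \<in> invol231 n. P (nfix n p) (nexc n p)}"
    then have p: "p \<in> invol231 n" and P: "P (nfix n p) (nexc n p)" by auto
    let ?k = "p n" and ?r = "restrict_below (p n) p"
    have k: "?k \<in> {1..n}" using invol231_in_range[OF p, of n] n by simp
    have p_eq: "append_reversal ?k n ?r = p" by (rule invol231_decompose(2)[OF p n])
    have "?r \<in> S ?k"
      using stats[OF k invol231_decompose(1)[OF p n]] P p_eq by metis
    then show "p \<in> (\<Union>k\<in>{1..n}. append_reversal k n ` S k)"
      using k p_eq by (metis UN_iff image_eqI)
  next
    fix p assume "p \<in> (\<Union>k\<in>{1..n}. append_reversal k n ` S k)"
    then obtain k r where k: "k \<in> {1..n}" and r: "r \<in> S k" and p: "p = append_reversal k n r"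
      by auto
    have "r \<in> invol231 (k - 1)" using r by (simp add: S_def)
    then show "p \<in> {p \<in> invol231 n. P (nfix n p) (nexc n p)}"
      using append_reversal_in_invol231[of k n r] stats[OF k] k r p by auto
  qed
  moreover have "card (\<Union>k\<in>{1..n}. append_reversal k n ` S k) = (\<Sum>k\<in>{1..n}. card (S k))"
  proof (subst card_UN_disjoint)
    have last: "append_reversal k n r n = k" if "k \<le> n" for k r
      using that by (simp add: append_reversal_def)
    show "\<forall>k\<in>{1..n}. \<forall>j\<in>{1..n}. k \<noteq> j \<longrightarrow>
        append_reversal k n ` S k \<inter> append_reversal j n ` S j = {}"
      using last by (auto dest: fun_cong[where x = n])
    have "inj_on (append_reversal k n) (S k)" for k
      by (rule inj_on_inverseI[where g = "restrict_below k"])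
        (simp add: S_def restrict_below_append_reversal)
    then show "(\<Sum>k\<in>{1..n}. card (append_reversal k n ` S k)) = (\<Sum>k\<in>{1..n}. card (S k))"
      by (simp add: card_image)
  qed (simp_all add: S_def finite_invol231)
  ultimately show ?thesis
    by (simp add: count_invol231_def S_def)
qed

lemma count_invol231_1: "count_invol231 1 P = count_invol231 0 (\<lambda>a b. P (Suc a) b)"
  using count_invol231_decompose[of 1 P] by simp

lemma count_invol231_Suc_Suc:
  "count_invol231 (Suc (Suc m)) P = count_invol231 (Suc m) (\<lambda>a b. P (Suc a) b)
     + (if m = 0 then 1 else 2) * count_invol231 m (\<lambda>a b. P a (Suc b))"
proof -
  define T where "T n Q k = count_invol231 (k - 1)
    (\<lambda>a b. Q (a + (if even (n - k) then 1 else 0)) (b + (n - k + 1) div 2))" for n Q k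
  \<comment> \<open>A last block of length at least 3 is the last block of size m lengthened by 2.\<close>
  have shift: "T (Suc (Suc m)) P k = T m (\<lambda>a b. P a (Suc b)) k" if "k \<in> {1..m}" for k
  proof -
    have "even (Suc (Suc m) - k) = even (m - k)"
      and "(Suc (Suc m) - k + 1) div 2 = Suc ((m - k + 1) div 2)"
      using that by (simp_all add: Suc_diff_le)
    then show ?thesis by (simp add: T_def)
  qed
  have "count_invol231 (Suc (Suc m)) P = (\<Sum>k\<in>{1..Suc (Suc m)}. T (Suc (Suc m)) P k)"
    unfolding T_def by (rule count_invol231_decompose) simp
  also have "\<dots> = (\<Sum>k\<in>{1..m}. T m (\<lambda>a b. P a (Suc b)) k)
      + count_invol231 m (\<lambda>a b. P a (Suc b)) + count_invol231 (Suc m) (\<lambda>a b. P (Suc a) b)"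
    using shift by (simp add: sum.cl_ivl_Suc T_def)
  also have "(\<Sum>k\<in>{1..m}. T m (\<lambda>a b. P a (Suc b)) k)
      = (if m = 0 then 0 else count_invol231 m (\<lambda>a b. P a (Suc b)))"
    using count_invol231_decompose[of m] by (simp add: T_def)
  finally show ?thesis by simp
qed

lemma orbit_involution:
  assumes "\<And>x. p (p x) = x"
  shows "orbit p x = {x, p x}"
proof
  show "orbit p x \<subseteq> {x, p x}"
  proof
    fix y assume "y \<in> orbit p x"
    then show "y \<in> {x, p x}" by induct (use assms in auto)
  qed
  show "{x, p x} \<subseteq> orbit p x"
    using orbit.base[of p x] orbit.step[of "p x" p x] assms by auto
qed

lemma funpow_card_orbit:
  assumes "x \<in> orbit f x"
  shows "(f ^^ card (orbit f x)) x = x"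
proof -
  have "card (orbit f x) = funpow_dist1 f x x"
    using orbit_conv_funpow_dist1[OF assms] inj_on_funpow_dist1[OF assms] by (simp add: card_image)
  then show ?thesis using funpow_dist1_prop[OF assms] by simp
qed

lemma permutes_cycles_of_card_le_2_iff:
  assumes p: "p permutes {1..n}"
  shows "(\<forall>C\<in>cycles_of n p. card C = 1 \<or> card C = 2) \<longleftrightarrow> (\<forall>x. p (p x) = x)"
proof
  assume "\<forall>x. p (p x) = x"
  then show "\<forall>C\<in>cycles_of n p. card C = 1 \<or> card C = 2"
    by (auto simp: cycles_of_def orbit_involution card_insert_if)
next
  assume cycles: "\<forall>C\<in>cycles_of n p. card C = 1 \<or> card C = 2"
  show "\<forall>x. p (p x) = x"
  proof
    fix x
    show "p (p x) = x"
    proof (cases "x \<in> {1..n}")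
      case True
      have "permutation p" using p by (auto simp: permutation_permutes)
      then have "x \<in> orbit p x" by (rule permutation_self_in_orbit)
      then have "(p ^^ card (orbit p x)) x = x" by (rule funpow_card_orbit)
      moreover have "card (orbit p x) = 1 \<or> card (orbit p x) = 2"
        using cycles True by (auto simp: cycles_of_def)
      ultimately show ?thesis by (auto simp: numeral_2_eq_2)
    qed (use p permutes_not_in in fastforce)
  qed
qed

lemma ncyc_1_involution:
  assumes invo: "\<And>x. p (p x) = x"
  shows "ncyc 1 p n = nfix n p"
proof -
  have "{C \<in> cycles_of n p. card C = 1} = (\<lambda>x. {x}) ` {x \<in> {1..n}. p x = x}"
  proof (intro equalityI subsetI)
    fix C assume "C \<in> {C \<in> cycles_of n p. card C = 1}"
    then obtain x where "x \<in> {1..n}" "p x = x" "C = {x}"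
      by (auto simp: cycles_of_def orbit_involution[OF invo] card_insert_if split: if_splits)
    then show "C \<in> (\<lambda>x. {x}) ` {x \<in> {1..n}. p x = x}" by auto
  next
    fix C assume "C \<in> (\<lambda>x. {x}) ` {x \<in> {1..n}. p x = x}"
    then obtain x where x: "x \<in> {1..n}" "p x = x" and C: "C = {x}" by auto
    then have "C = orbit p x" using orbit_involution[OF invo, of x] by simp
    then have "C \<in> cycles_of n p" using x by (auto simp: cycles_of_def)
    then show "C \<in> {C \<in> cycles_of n p. card C = 1}" using C by simp
  qed
  then show ?thesis
    by (simp add: ncyc_def nfix_def card_image)
qed

lemma ncyc_2_involution:
  assumes p: "p permutes {1..n}" and invo: "\<And>x. p (p x) = x"
  shows "ncyc 2 p n = nexc n p"
proof -
  have "{C \<in> cycles_of n p. card C = 2} = (\<lambda>x. {x, p x}) ` {x \<in> {1..n}. x < p x}"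
  proof (intro equalityI subsetI)
    fix C assume "C \<in> {C \<in> cycles_of n p. card C = 2}"
    then obtain x where x: "x \<in> {1..n}" "p x \<noteq> x" and C: "C = {x, p x}"
      by (auto simp: cycles_of_def orbit_involution[OF invo] card_insert_if split: if_splits)
    show "C \<in> (\<lambda>x. {x, p x}) ` {x \<in> {1..n}. x < p x}"
    proof (cases "x < p x")
      case True
      then show ?thesis using x C by blast
    next
      case False
      then have "p x < p (p x)" using x(2) invo[of x] by simp
      moreover have "p x \<in> {1..n}" using permutes_in_image[OF p] x by blast
      moreover have "C = {p x, p (p x)}" using C invo by auto
      ultimately show ?thesis by blast
    qed
  qed (auto simp: cycles_of_def orbit_involution[OF invo])
  moreover have "inj_on (\<lambda>x. {x, p x}) {x \<in> {1..n}. x < p x}"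
    by (auto simp: inj_on_def doubleton_eq_iff)
  ultimately show ?thesis
    by (simp add: ncyc_def nexc_def card_image)
qed

lemma nfix_add_nexc_involution:
  assumes p: "p permutes {1..n}" and invo: "\<And>x. p (p x) = x"
  shows "nfix n p + 2 * nexc n p = n"
proof -
  let ?F = "{x \<in> {1..n}. p x = x}" and ?U = "{x \<in> {1..n}. x < p x}"
    and ?D = "{x \<in> {1..n}. p x < x}"
  have range: "p x \<in> {1..n} \<longleftrightarrow> x \<in> {1..n}" for x
    using permutes_in_image[OF p] .
  have "?D = p ` ?U"
  proof (intro equalityI subsetI)
    fix x assume "x \<in> ?D"
    then have "p x \<in> ?U" and "x = p (p x)" using range[of x] invo[of x] by auto
    then show "x \<in> p ` ?U" by blast
  qed (use range invo in auto)
  moreover have "inj_on p ?U" by (metis inj_onI invo)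
  ultimately have "card ?D = card ?U" by (simp add: card_image)
  have "n = card {1..n}" by simp
  also have "\<dots> = card (?F \<union> (?U \<union> ?D))" by (rule arg_cong[where f = card]) auto
  also have "\<dots> = card ?F + card (?U \<union> ?D)" by (rule card_Un_disjoint) auto
  also have "card (?U \<union> ?D) = card ?U + card ?D" by (rule card_Un_disjoint) auto
  finally show ?thesis using \<open>card ?D = card ?U\<close> by (simp add: nfix_def nexc_def)
qed

lemma I_set_eq_Sigma: "I_set = (SIGMA n:UNIV. invol231 n)"
proof -
  have "(n, p) \<in> I_set \<longleftrightarrow> p \<in> invol231 n" for n p
    using permutes_cycles_of_card_le_2_iff[of p n] by (auto simp: I_set_def invol231_def)
  then show ?thesis by auto
qed

lemma invol231_stats:
  assumes "p \<in> invol231 n"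
  shows "ncyc 1 p n = nfix n p" "ncyc 2 p n = nexc n p" "nfix n p + 2 * nexc n p = n"
  using ncyc_1_involution[OF invol231_D(3)[OF assms]]
    ncyc_2_involution[OF invol231_D(1,3)[OF assms]]
    nfix_add_nexc_involution[OF invol231_D(1,3)[OF assms]]
  by auto

lemma card_I_set_stat:
  "card {(n, p) \<in> I_set. ncyc 1 p n = a \<and> ncyc 2 p n = b}
     = count_invol231 (a + 2 * b) (\<lambda>x y. x = a \<and> y = b)"
proof -
  let ?n = "a + 2 * b"
  let ?A = "{p \<in> invol231 ?n. nfix ?n p = a \<and> nexc ?n p = b}"
  have "{(n, p) \<in> I_set. ncyc 1 p n = a \<and> ncyc 2 p n = b} = Pair ?n ` ?A"
  proof (intro equalityI subsetI)
    fix z assume "z \<in> {(n, p) \<in> I_set. ncyc 1 p n = a \<and> ncyc 2 p n = b}"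
    then obtain n p where z: "z = (n, p)" "p \<in> invol231 n" "ncyc 1 p n = a" "ncyc 2 p n = b"
      by (auto simp: I_set_eq_Sigma)
    then show "z \<in> Pair ?n ` ?A"
      using invol231_stats[OF z(2)] by auto
  next
    fix z assume "z \<in> Pair ?n ` ?A"
    then obtain p where z: "z = (?n, p)" "p \<in> invol231 ?n" "nfix ?n p = a" "nexc ?n p = b"
      by auto
    then show "z \<in> {(n, p) \<in> I_set. ncyc 1 p n = a \<and> ncyc 2 p n = b}"
      using invol231_stats[OF z(2)] by (simp add: I_set_eq_Sigma)
  qed
  then show ?thesis
    by (simp add: count_invol231_def card_image inj_on_def)
qed

definition num_invol231 :: "nat \<Rightarrow> nat \<Rightarrow> nat" where
  "num_invol231 a b = count_invol231 (a + 2 * b) (\<lambda>x y. x = a \<and> y = b)"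

lemma num_invol231_rec:
  "real (num_invol231 a b)
     = (if a = 0 then 0 else real (num_invol231 (a - 1) b))
       + 2 * (if b = 0 then 0 else real (num_invol231 a (b - 1)))
       + (if a = 0 \<and> b = 0 then 1 else 0) - (if a = 0 \<and> b = 1 then 1 else 0)"
proof -
  have base: "num_invol231 0 0 = 1"
    by (simp add: num_invol231_def count_invol231_0)
  consider "a = 0 \<and> b = 0" | "a = 1 \<and> b = 0" | m where "a + 2 * b = Suc (Suc m)"
  proof (cases "a + 2 * b")
    case (Suc n)
    show ?thesis
    proof (cases n)
      case 0
      then have "a = 1 \<and> b = 0" using Suc by presburger
      then show ?thesis using that(2) by blast
    qed (use Suc that(3) in blast)
  qed (use that(1) in auto)
  then show ?thesis
  proof cases
    case 1
    then show ?thesis using base by simp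
  next
    case 2
    then show ?thesis
      using base count_invol231_1[of "\<lambda>x y. x = 1 \<and> y = 0"] by (simp add: num_invol231_def)
  next
    case (3 m)
    have fix_step: "count_invol231 (Suc m) (\<lambda>x y. Suc x = a \<and> y = b)
        = (if a = 0 then 0 else num_invol231 (a - 1) b)"
      using 3 by (cases a) (simp_all add: num_invol231_def count_invol231_def)
    have exc_step: "count_invol231 m (\<lambda>x y. x = a \<and> Suc y = b)
        = (if b = 0 then 0 else num_invol231 a (b - 1))"
      using 3 by (cases b) (simp_all add: num_invol231_def count_invol231_def)
    have "m = 0 \<and> b \<noteq> 0 \<longleftrightarrow> a = 0 \<and> b = 1" using 3 by auto
    then show ?thesis
      using count_invol231_Suc_Suc[of m "\<lambda>x y. x = a \<and> y = b"] fix_step exc_step base 3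
      by (auto simp: num_invol231_def)
  qed
qed

lemma i_gf_nth_nth: "i_gf $ b $ a = real (num_invol231 a b)"
  by (simp only: i_gf_def fps_nth_Abs_fps card_I_set_stat num_invol231_def)

lemma i_gf_times_denominator: "i_gf * (1 - t_var - 2 * fps_X) = 1 - fps_X"
proof (intro fps_ext)
  fix a b
  have "i_gf * (1 - t_var - 2 * fps_X)
      = i_gf - fps_const fps_X * i_gf - (fps_X * i_gf + fps_X * i_gf)"
    by (simp add: t_var_def algebra_simps)
  then have "(i_gf * (1 - t_var - 2 * fps_X)) $ b $ a
      = i_gf $ b $ a - (if a = 0 then 0 else i_gf $ b $ (a - 1))
        - 2 * (if b = 0 then 0 else i_gf $ (b - 1) $ a)"
    by (simp only: fps_sub_nth fps_add_nth fps_mult_left_const_nth fps_X_mult_nth) simp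
  also have "\<dots> = (1 - fps_X) $ b $ a"
    unfolding i_gf_nth_nth using num_invol231_rec[of a b] by simp
  finally show "(i_gf * (1 - t_var - 2 * fps_X)) $ b $ a = (1 - fps_X) $ b $ a" .
qed

lemma fps_mult_inverse_eq_1:
  fixes f :: "'a::{ring_1,inverse} fps"
  assumes "f $ 0 * inverse (f $ 0) = 1"
  shows "f * inverse f = 1"
  using fps_right_inverse[OF assms] by (simp add: fps_inverse_def)

theorem lemma3p8:
  shows "i_gf = (1 - fps_X) * inverse (1 - t_var - 2 * fps_X)"
proof -
  let ?D = "1 - t_var - 2 * fps_X :: real fps fps"
  have "?D $ 0 * inverse (?D $ 0) = 1"
    by (rule inverse_mult_eq_1') (simp add: t_var_def)
  then have "?D * inverse ?D = 1" by (rule fps_mult_inverse_eq_1)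
  then have "i_gf = i_gf * ?D * inverse ?D" by (simp add: mult.assoc)
  then show ?thesis by (simp add: i_gf_times_denominator)
qed

end
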